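(* Let $A$ be a Nakayama algebra which is a higher Auslander algebra of odd global dimension. Then for every odd indecomposable $A$-module $M$, the sequence $\operatorname{char}M=(c_1,\dots,c_m)$ consists of odd numbers and is weakly decreasing: $c_1\ge c_2\ge\cdots\ge c_m$. (Equivalently, with $S=\operatorname{top}M$: $\operatorname{pd}\tau^{m-1}S\ge\cdots\ge\operatorname{pd}\tau S\ge\operatorname{pd}S$.)
   Context: A Nakayama algebra is a basic $kQ/I$ ($k$ a field) with $Q$ a linearly oriented path or an oriented cycle; modules are finitely generated left modules, indecomposables uniserial; $\tau$ is the Auslander–Reiten translation. An indecomposable module is even/odd according to the parity of its projective dimension. For indecomposable $M$ with composition factors $F_1=\operatorname{soc}M,\dots,F_m=\operatorname{top}M$ (bottom to top), $\operatorname{char}M=(z_1,\dots,z_m)$ with $z_i=\operatorname{pd}F_i$ if $F_i$ odd and $z_i=\operatorname{pd}M$ if $F_i$ even. Higher Auslander algebra: global dimension equals dominant dimension (the number of initial projective terms of a minimal injective coresolution of ${}_AA$). *)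

theory Defs
  imports Main "HOL-Library.Extended_Nat"
begin

text \<open>Combinatorial model of a (connected, basic) Nakayama algebra A = kQ/I with n simples
S_0,...,S_(n-1).  The flag cyc says whether Q is an oriented cycle (True) or a linearly
oriented path (False); c is the Kupisch series: c i is the length of the indecomposable
projective P_i.  Convention: P_i has composition factors (top to bottom)
S_i, S_(i+1), ..., S_(i + c i - 1) (indices mod n).
An indecomposable module is encoded as a pair (i, l): the unique uniserial module with top S_i
and length l (1 \<le> l \<le> c i); the pair (i, 0) encodes the zero module.\<close>

definition is_nakayama :: "bool \<Rightarrow> nat \<Rightarrow> (nat \<Rightarrow> nat) \<Rightarrow> bool" where
  "is_nakayama cyc n c \<longleftrightarrow> n \<ge> 1 \<and>
     (if cyc then (\<forall>i<n. c i \<ge> 2 \<and> c ((i + 1) mod n) + 1 \<ge> c i)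
      else (c (n - 1) = 1 \<and> (\<forall>i. i + 1 < n \<longrightarrow> c i \<ge> 2 \<and> c (i + 1) + 1 \<ge> c i)))"

definition is_module :: "nat \<Rightarrow> (nat \<Rightarrow> nat) \<Rightarrow> nat \<times> nat \<Rightarrow> bool" where
  "is_module n c M \<longleftrightarrow> fst M < n \<and> 1 \<le> snd M \<and> snd M \<le> c (fst M)"

definition is_proj :: "(nat \<Rightarrow> nat) \<Rightarrow> nat \<times> nat \<Rightarrow> bool" where
  "is_proj c M \<longleftrightarrow> 0 < snd M \<and> snd M = c (fst M)"

definition syz :: "nat \<Rightarrow> (nat \<Rightarrow> nat) \<Rightarrow> nat \<times> nat \<Rightarrow> nat \<times> nat" where
  "syz n c M = (if snd M = 0 then M else ((fst M + snd M) mod n, c (fst M) - snd M))"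

definition pdim :: "nat \<Rightarrow> (nat \<Rightarrow> nat) \<Rightarrow> nat \<times> nat \<Rightarrow> enat" where
  "pdim n c M = (if \<exists>k. is_proj c ((syz n c ^^ k) M)
                 then enat (LEAST k. is_proj c ((syz n c ^^ k) M)) else \<infinity>)"

definition simple :: "nat \<Rightarrow> nat \<Rightarrow> nat \<times> nat" where
  "simple n i = (i mod n, 1)"

definition odd_module :: "nat \<Rightarrow> (nat \<Rightarrow> nat) \<Rightarrow> nat \<times> nat \<Rightarrow> bool" where
  "odd_module n c M \<longleftrightarrow> (\<exists>k. pdim n c M = enat k \<and> odd k)"

text \<open>composition factors F_1 = soc M, ..., F_m = top M (bottom to top)\<close>
definition comp_factors :: "nat \<Rightarrow> nat \<times> nat \<Rightarrow> (nat \<times> nat) list" where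
  "comp_factors n M = map (\<lambda>j. simple n (fst M + snd M - j)) [1..<snd M + 1]"

definition char_seq :: "nat \<Rightarrow> (nat \<Rightarrow> nat) \<Rightarrow> nat \<times> nat \<Rightarrow> enat list" where
  "char_seq n c M = map (\<lambda>F. if odd_module n c F then pdim n c F else pdim n c M) (comp_factors n M)"

text \<open>For a socle index s, the uniserial module of length l with socle S_s
has top S_(s-l+1); it exists iff ext_ok holds. The injective envelope of a module with socle
S_s is the longest such module.\<close>
definition ext_ok :: "bool \<Rightarrow> nat \<Rightarrow> (nat \<Rightarrow> nat) \<Rightarrow> nat \<Rightarrow> nat \<Rightarrow> bool" where
  "ext_ok cyc n c s l \<longleftrightarrow> 1 \<le> l \<and>
     (if cyc then l \<le> c ((s + n * l + 1 - l) mod n) else l \<le> s + 1 \<and> l \<le> c (s + 1 - l))"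

definition top_of :: "bool \<Rightarrow> nat \<Rightarrow> nat \<Rightarrow> nat \<Rightarrow> nat" where
  "top_of cyc n s l = (if cyc then (s + n * l + 1 - l) mod n else s + 1 - l)"

definition inj_env :: "bool \<Rightarrow> nat \<Rightarrow> (nat \<Rightarrow> nat) \<Rightarrow> nat \<times> nat \<Rightarrow> nat \<times> nat" where
  "inj_env cyc n c M =
     (let s = (fst M + snd M - 1) mod n; L = Max {l. ext_ok cyc n c s l} in (top_of cyc n s L, L))"

definition cosyz :: "bool \<Rightarrow> nat \<Rightarrow> (nat \<Rightarrow> nat) \<Rightarrow> nat \<times> nat \<Rightarrow> nat \<times> nat" where
  "cosyz cyc n c M = (if snd M = 0 then M else (fst (inj_env cyc n c M), snd (inj_env cyc n c M) - snd M))"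

text \<open>dominant dimension of an indecomposable module: number of initial projective terms
I_0, I_1, ... of its minimal injective coresolution (I_j = I(cosyz^j M)).\<close>
definition domdim_mod :: "bool \<Rightarrow> nat \<Rightarrow> (nat \<Rightarrow> nat) \<Rightarrow> nat \<times> nat \<Rightarrow> enat" where
  "domdim_mod cyc n c M =
     (if \<exists>j. 0 < snd ((cosyz cyc n c ^^ j) M) \<and> \<not> is_proj c (inj_env cyc n c ((cosyz cyc n c ^^ j) M))
      then enat (LEAST j. 0 < snd ((cosyz cyc n c ^^ j) M) \<and>
                     \<not> is_proj c (inj_env cyc n c ((cosyz cyc n c ^^ j) M)))
      else \<infinity>)"

text \<open>dominant dimension of A = direct sum of the P_i\<close>
definition domdim :: "bool \<Rightarrow> nat \<Rightarrow> (nat \<Rightarrow> nat) \<Rightarrow> enat" where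
  "domdim cyc n c = (INF i\<in>{..<n}. domdim_mod cyc n c (i, c i))"

definition gldim :: "nat \<Rightarrow> (nat \<Rightarrow> nat) \<Rightarrow> enat" where
  "gldim n c = (SUP M\<in>{M. is_module n c M}. pdim n c M)"

definition higher_auslander :: "bool \<Rightarrow> nat \<Rightarrow> (nat \<Rightarrow> nat) \<Rightarrow> bool" where
  "higher_auslander cyc n c \<longleftrightarrow> gldim n c = domdim cyc n c"

end

theory Submission
  imports Defs
begin

(* Encode the uniserial module with top S_(a mod n) and length b - a by the integer interval
   [a, b), where a < b <= F a and F a - a is the Kupisch length at a.  The syzygy of [a, b) is
   [b, F a), the injective envelope of [x, y) is [h y, y) for the lower adjoint h of the monotone
   map F, and the cosyzygy is [h y, x).
   Global dimension d bounds all projective dimensions; dominant dimension d says that the first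
   d terms of the minimal injective coresolution of every non-injective projective [t, F t) are
   projective.  As d is odd, running d steps of this coresolution from F^j t shows that all
   F^j t (j > 0) are projective-injective, and this excludes an even projective dimension for any
   interval strictly inside a non-injective projective.  An induction on pd [x, z) then shows: if
   pd [x, z) is odd and x < y < z, then pd [x, y) and pd [y, z) are odd and pd [x, y) <= pd [y, z).
   Applied to the unit intervals inside an odd module, i.e. to its composition factors, this
   gives the odd, weakly decreasing characteristic sequence. *)

definition steps_until :: "('a \<Rightarrow> 'a) \<Rightarrow> ('a \<Rightarrow> bool) \<Rightarrow> 'a \<Rightarrow> enat" where
  "steps_until g p x = (if \<exists>k. p ((g ^^ k) x) then enat (LEAST k. p ((g ^^ k) x)) else \<infinity>)"

lemma steps_until_rec: "steps_until g p x = (if p x then 0 else eSuc (steps_until g p (g x)))"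
proof (cases "p x")
  case True
  then show ?thesis
    unfolding steps_until_def by (auto simp: zero_enat_def intro: Least_eq_0 exI[of _ 0])
next
  case False
  have shift: "(\<lambda>k. p ((g ^^ Suc k) x)) = (\<lambda>k. p ((g ^^ k) (g x)))"
    by (simp add: funpow_Suc_right del: funpow.simps)
  have ex: "(\<exists>k. p ((g ^^ k) x)) \<longleftrightarrow> (\<exists>k. p ((g ^^ k) (g x)))"
  proof
    assume "\<exists>k. p ((g ^^ k) x)"
    then obtain k where "p ((g ^^ k) x)" by blast
    with False obtain k' where "k = Suc k'" by (cases k) auto
    then show "\<exists>k. p ((g ^^ k) (g x))" using shift \<open>p ((g ^^ k) x)\<close> by metis
  next
    assume "\<exists>k. p ((g ^^ k) (g x))"
    then show "\<exists>k. p ((g ^^ k) x)" using shift by metis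
  qed
  show ?thesis
  proof (cases "\<exists>k. p ((g ^^ k) (g x))")
    case True
    then obtain k where k: "p ((g ^^ Suc k) x)" using shift by metis
    have "(LEAST k. p ((g ^^ k) x)) = Suc (LEAST k. p ((g ^^ k) (g x)))"
      using Least_Suc[where P = "\<lambda>k. p ((g ^^ k) x)", OF k] False
      by (simp only: shift funpow_0 not_False_eq_True simp_thms)
    then show ?thesis
      using True ex False unfolding steps_until_def by (simp add: eSuc_enat)
  qed (use ex False in \<open>simp add: steps_until_def\<close>)
qed

lemma steps_until_eq_0_iff: "steps_until g p x = 0 \<longleftrightarrow> p x"
  by (subst steps_until_rec) simp

lemma steps_until_eq_Suc_iff:
  "steps_until g p x = enat (Suc k) \<longleftrightarrow> \<not> p x \<and> steps_until g p (g x) = enat k"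
  by (subst steps_until_rec) (simp add: eSuc_enat[symmetric])

lemma not_before_steps_until:
  assumes "enat d \<le> steps_until g p x" "j < d"
  shows "\<not> p ((g ^^ j) x)"
  using assms not_less_Least[of j "\<lambda>k. p ((g ^^ k) x)"] unfolding steps_until_def
  by (auto split: if_splits)

lemma steps_until_bisim:
  assumes "R x y"
    and same_test: "\<And>x y. R x y \<Longrightarrow> p x \<longleftrightarrow> q y"
    and step: "\<And>x y. R x y \<Longrightarrow> \<not> p x \<Longrightarrow> R (g x) (f y)"
  shows "steps_until g p x = steps_until f q y"
proof -
  have same_finite: "steps_until g p x = enat k \<longleftrightarrow> steps_until f q y = enat k"
    if "R x y" for k x y
    using that
  proof (induction k arbitrary: x y)
    case 0
    then show ?case using same_test by (simp add: steps_until_eq_0_iff flip: zero_enat_def)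
  next
    case (Suc k)
    show ?case
    proof (cases "p x")
      case True
      then show ?thesis using same_test[OF Suc.prems] by (simp add: steps_until_eq_Suc_iff)
    next
      case False
      then show ?thesis
        using same_test[OF Suc.prems] Suc.IH[OF step[OF Suc.prems False]]
        by (simp add: steps_until_eq_Suc_iff)
    qed
  qed
  then show ?thesis
    using assms(1) by (metis enat.exhaust)
qed

locale kupisch_map =
  fixes F :: "int \<Rightarrow> int"
  assumes F_mono: "x \<le> y \<Longrightarrow> F x \<le> F y"
    and less_F: "x < F x"
    and F_unbounded_below: "\<exists>x. F x < y"
begin

lemma lower_adjoint_ex: "\<exists>u. \<forall>v. y \<le> F v \<longleftrightarrow> u \<le> v"
proof -
  obtain x where x: "F x < y" using F_unbounded_below by blast
  define k where "k = (LEAST k. y \<le> F (x + int k))"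
  have "y \<le> F (x + int (nat (y - x)))" using less_F[of x] less_F[of y] x by simp
  then have k: "y \<le> F (x + int k)" unfolding k_def by (rule LeastI)
  have "y \<le> F v \<longleftrightarrow> x + int k \<le> v" for v
  proof
    assume v: "y \<le> F v"
    then have "x < v" using F_mono[of v x] x by force
    then have "y \<le> F (x + int (nat (v - x)))" using v by simp
    then have "k \<le> nat (v - x)" unfolding k_def by (rule Least_le)
    then show "x + int k \<le> v" using \<open>x < v\<close> by simp
  next
    assume "x + int k \<le> v"
    then show "y \<le> F v" using k F_mono order_trans by blast
  qed
  then show ?thesis by blast
qed

definition h :: "int \<Rightarrow> int" where
  "h y = (SOME u. \<forall>v. y \<le> F v \<longleftrightarrow> u \<le> v)"

lemma le_F_iff_h_le: "y \<le> F u \<longleftrightarrow> h y \<le> u"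
  unfolding h_def using someI_ex[OF lower_adjoint_ex] by blast

lemma le_F_h: "y \<le> F (h y)"
  using le_F_iff_h_le by blast

lemma h_less: "h y < y"
  using le_F_iff_h_le[of y "y - 1"] less_F[of "y - 1"] by simp

lemma h_mono: "x \<le> y \<Longrightarrow> h x \<le> h y"
  using le_F_iff_h_le[of x "h y"] le_F_h[of y] by simp

lemma h_F_le: "h (F u) \<le> u"
  using le_F_iff_h_le by blast

text \<open>\<open>proj_inj p\<close>: the projective \<open>[p, F p)\<close> is also injective.
  \<open>env_proj y\<close>: the injective envelope \<open>[h y, y)\<close> is projective.\<close>
definition proj_inj :: "int \<Rightarrow> bool" where
  "proj_inj p \<longleftrightarrow> F (p - 1) < F p"

definition env_proj :: "int \<Rightarrow> bool" where
  "env_proj y \<longleftrightarrow> F (h y) = y"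

lemma env_proj_F: "env_proj (F u)"
  unfolding env_proj_def using le_F_h[of "F u"] F_mono[OF h_F_le[of u]] by simp

lemma h_F_proj_inj: "proj_inj p \<Longrightarrow> h (F p) = p"
  unfolding proj_inj_def using h_F_le[of p] le_F_iff_h_le[of "F p" "p - 1"] by force

lemma h_F_less_not_proj_inj: "\<not> proj_inj t \<Longrightarrow> h (F t) < t"
  unfolding proj_inj_def using le_F_iff_h_le[of "F t" "t - 1"] F_mono[of "t - 1" t] by simp

definition pd :: "int \<Rightarrow> int \<Rightarrow> enat" where
  "pd a b = steps_until (\<lambda>(a, b). (b, F a)) (\<lambda>(a, b). b = F a) (a, b)"

lemma pd_eq_0_iff: "pd a b = 0 \<longleftrightarrow> b = F a"
  unfolding pd_def steps_until_eq_0_iff by simp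

lemma pd_eq_Suc_iff: "pd a b = enat (Suc k) \<longleftrightarrow> b \<noteq> F a \<and> pd b (F a) = enat k"
  unfolding pd_def steps_until_eq_Suc_iff by simp

lemma funpow_h_funpow_F:
  assumes "\<And>i. i < j \<Longrightarrow> 0 < i \<Longrightarrow> proj_inj ((F ^^ i) t)" "k < j"
  shows "(h ^^ k) ((F ^^ j) t) = (F ^^ (j - k)) t"
  using assms(2)
proof (induction k)
  case (Suc k)
  have "proj_inj ((F ^^ (j - Suc k)) t)" using assms(1) Suc.prems by simp
  moreover have "j - k = Suc (j - Suc k)" using Suc.prems by simp
  ultimately show ?case using Suc h_F_proj_inj by simp
qed simp

text \<open>The \<open>j\<close>-th cosyzygy of the projective \<open>[t, F t)\<close> is \<open>[coresol t (j + 1), coresol t j)\<close>,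
  as long as these intervals are nonempty.\<close>
fun coresol :: "int \<Rightarrow> nat \<Rightarrow> int" where
  "coresol t 0 = F t"
| "coresol t (Suc 0) = t"
| "coresol t (Suc (Suc j)) = h (coresol t j)"

lemma coresol_Suc_le: "coresol t (Suc j) \<le> coresol t j"
proof (induction j rule: less_induct)
  case (less j)
  consider "j = 0" | "j = 1" | i where "j = Suc (Suc i)"
    by (metis One_nat_def not0_implies_Suc)
  then show ?case
  proof cases
    case 1
    then show ?thesis using less_F[of t] by simp
  next
    case 2
    then show ?thesis using h_F_le[of t] by simp
  next
    case 3
    then show ?thesis using less.IH[of i] h_mono by simp
  qed
qed

lemma coresol_le_F_Suc: "coresol t j \<le> F (coresol t (Suc j))"
proof (cases j)
  case (Suc i)
  then show ?thesis using coresol_Suc_le[of t i] le_F_h[of "coresol t i"] by simp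
qed simp

lemma coresol_even: "coresol t (2 * k) = (h ^^ k) (F t)"
  by (induction k) (simp_all add: funpow_swap1)

lemma coresol_odd: "coresol t (Suc (2 * k)) = (h ^^ k) t"
  by (induction k) (simp_all add: funpow_swap1)

end

text \<open>The interval form of a higher Auslander algebra of odd global dimension \<open>d\<close>; the last
  assumption is dominant dimension \<open>\<ge> d\<close>, stated for non-injective projectives.\<close>
locale odd_auslander_map = kupisch_map +
  fixes d :: nat
  assumes pd_le_d: "a < b \<Longrightarrow> b \<le> F a \<Longrightarrow> pd a b \<le> enat d"
    and odd_d: "odd d"
    and env_proj_coresol_if_nonzero:
      "\<not> proj_inj t \<Longrightarrow> j < d \<Longrightarrow> \<forall>i\<le>j. coresol t (Suc i) < coresol t i \<Longrightarrow>
       env_proj (coresol t j)"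
begin

lemma coresol_Suc_less: "\<not> proj_inj t \<Longrightarrow> j \<le> d \<Longrightarrow> coresol t (Suc j) < coresol t j"
proof (induction j rule: less_induct)
  case (less j)
  consider "j = 0" | "j = 1" | i where "j = Suc (Suc i)"
    by (metis One_nat_def not0_implies_Suc)
  then show ?case
  proof cases
    case 1
    then show ?thesis using less_F[of t] by simp
  next
    case 2
    then show ?thesis using h_F_less_not_proj_inj[OF less.prems(1)] by simp
  next
    case 3
    have nonzero: "\<forall>i'\<le>Suc i. coresol t (Suc i') < coresol t i'"
      using less 3 by auto
    have "env_proj (coresol t i)" "env_proj (coresol t (Suc i))"
      using env_proj_coresol_if_nonzero[OF less.prems(1)] nonzero less.prems 3 by auto
    then have F_eqs: "F (coresol t (Suc j)) = coresol t (Suc i)" "F (coresol t j) = coresol t i"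
      using 3 by (simp_all add: env_proj_def)
    have "coresol t (Suc j) \<noteq> coresol t j"
    proof
      assume "coresol t (Suc j) = coresol t j"
      then have "coresol t (Suc i) = coresol t i" using F_eqs by metis
      then show False using nonzero[rule_format, of i] by simp
    qed
    then show ?thesis using coresol_Suc_le[of t j] by simp
  qed
qed

lemma env_proj_coresol: "\<not> proj_inj t \<Longrightarrow> j < d \<Longrightarrow> env_proj (coresol t j)"
  using env_proj_coresol_if_nonzero coresol_Suc_less by simp

lemma F_coresol_Suc_Suc: "\<not> proj_inj t \<Longrightarrow> j < d \<Longrightarrow> F (coresol t (Suc (Suc j))) = coresol t j"
  using env_proj_coresol unfolding env_proj_def by simp

lemma pd_coresol: "\<not> proj_inj t \<Longrightarrow> j \<le> d \<Longrightarrow> pd (coresol t (Suc j)) (coresol t j) = enat j"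
proof (induction j)
  case 0
  then show ?case using pd_eq_0_iff by (simp add: zero_enat_def[symmetric])
next
  case (Suc j)
  then show ?case
    using F_coresol_Suc_Suc[of t j] coresol_Suc_less[of t j] coresol_Suc_less[of t "Suc j"]
    by (simp add: pd_eq_Suc_iff)
qed

text \<open>The \<open>d\<close>-th term of the coresolution is not projective: otherwise the next cosyzygy
  would have projective dimension \<open>d + 1\<close>.\<close>
lemma not_env_proj_coresol_d: "\<not> proj_inj t \<Longrightarrow> \<not> env_proj (coresol t d)"
proof
  assume t: "\<not> proj_inj t" and env: "env_proj (coresol t d)"
  obtain d' where d: "d = Suc d'" using odd_d by (cases d) auto
  have F_Suc_Suc_d: "F (coresol t (Suc (Suc d))) = coresol t d"
    using env by (simp add: env_proj_def)
  have F_Suc_d: "F (coresol t (Suc d)) = coresol t d'"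
    using F_coresol_Suc_Suc[OF t, of d'] d by simp
  have less_d': "coresol t d < coresol t d'" using coresol_Suc_less[OF t, of d'] d by simp
  have less_d: "coresol t (Suc d) < coresol t d" using coresol_Suc_less[OF t, of d] by simp
  have less_Suc_d: "coresol t (Suc (Suc d)) < coresol t (Suc d)"
    using coresol_Suc_le[of t "Suc d"] F_Suc_Suc_d F_Suc_d less_d'
    by (metis order.strict_iff_order order.irrefl)
  have "pd (coresol t (Suc (Suc d))) (coresol t (Suc d)) = enat (Suc d)"
    using F_Suc_Suc_d less_d pd_coresol[OF t, of d] by (simp add: pd_eq_Suc_iff)
  moreover have "pd (coresol t (Suc (Suc d))) (coresol t (Suc d)) \<le> enat d"
    using pd_le_d[OF less_Suc_d coresol_le_F_Suc] .
  ultimately show False by simp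
qed

text \<open>Otherwise take the least such \<open>j\<close>: by minimality \<open>h\<close> undoes \<open>F\<close> along \<open>t, F t, \<dots>, F\<^sup>j t\<close>,
  so the odd-indexed term \<open>h\<^sup>i (F\<^sup>j t)\<close>, \<open>d = 2 i + 1\<close>, of the coresolution of \<open>F\<^sup>j t\<close> is either
  a value of \<open>F\<close> or an early even-indexed term of the coresolution of \<open>t\<close>; both have projective
  envelopes, contradicting the previous lemma.\<close>
lemma proj_inj_funpow_F:
  assumes t: "\<not> proj_inj t" and "0 < j"
  shows "proj_inj ((F ^^ j) t)"
  using assms(2)
proof (induction j rule: less_induct)
  case (less j)
  obtain i where d: "d = Suc (2 * i)" using odd_d by (metis oddE Suc_eq_plus1)
  define s where "s = (F ^^ j) t"
  show ?case
  proof (rule ccontr)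
    assume "\<not> proj_inj ((F ^^ j) t)"
    then have not_env: "\<not> env_proj ((h ^^ i) s)"
      using not_env_proj_coresol_d d coresol_odd unfolding s_def by metis
    have h_pow_s: "(h ^^ k) s = (F ^^ (j - k)) t" if "k < j" for k
      unfolding s_def using funpow_h_funpow_F[OF less.IH that] by simp
    show False
    proof (cases "i < j")
      case True
      moreover have "j - i = Suc (j - Suc i)" using True by simp
      ultimately have "(h ^^ i) s = F ((F ^^ (j - Suc i)) t)"
        using h_pow_s by simp
      then show False using not_env env_proj_F by simp
    next
      case False
      have "(h ^^ i) s = (h ^^ (i - (j - 1))) ((h ^^ (j - 1)) s)"
        using False by (simp flip: funpow_add[unfolded comp_def, THEN fun_cong])
      also have "(h ^^ (j - 1)) s = F t"
        using h_pow_s[of "j - 1"] less.prems by simp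
      finally have "(h ^^ i) s = coresol t (2 * (i - (j - 1)))"
        by (simp add: coresol_even)
      moreover have "2 * (i - (j - 1)) < d" using d less.prems by simp
      ultimately show False using not_env env_proj_coresol[OF t] by simp
    qed
  qed
qed

lemma pd_even_not_proj_inj:
  assumes "a < b" "b \<le> F a" "pd a b = enat (2 * j)" "0 < j"
  shows "\<not> proj_inj ((F ^^ j) a)"
  using assms
proof (induction j arbitrary: a b)
  case 0
  then show ?case by simp
next
  case (Suc j)
  have b: "b \<noteq> F a" and pd_1: "pd b (F a) = enat (Suc (2 * j))"
    using Suc.prems(3) by (simp_all add: pd_eq_Suc_iff)
  have F_ab: "F a \<noteq> F b" and pd_2: "pd (F a) (F b) = enat (2 * j)"
    using pd_1 by (simp_all add: pd_eq_Suc_iff)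
  show ?case
  proof (cases j)
    case 0
    then have "F b = F (F a)" using pd_2 pd_eq_0_iff by (simp add: zero_enat_def)
    moreover have "b \<le> F a - 1" using Suc.prems(2) b by simp
    ultimately show ?thesis
      using 0 F_mono[of b "F a - 1"] unfolding proj_inj_def by auto
  next
    case (Suc j')
    have "F a < F b" using F_ab F_mono[of a b] Suc.prems(1) by simp
    moreover have "F b \<le> F (F a)" using F_mono Suc.prems(2) by simp
    ultimately have "\<not> proj_inj ((F ^^ j) (F a))" using Suc.IH pd_2 Suc by simp
    then show ?thesis by (simp add: funpow_Suc_right del: funpow.simps)
  qed
qed

lemma pd_odd_inside_not_proj_inj:
  assumes t: "\<not> proj_inj t" and "t < x" "x < F t"
  obtains q where "pd t x = enat q" "odd q"
proof -
  obtain q where q: "pd t x = enat q" using pd_le_d[of t x] assms by (cases "pd t x") auto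
  have "odd q"
  proof
    assume "even q"
    then obtain j where j: "q = 2 * j" by blast
    have "j \<noteq> 0"
    proof
      assume "j = 0"
      then have "pd t x = 0" using q j by (simp add: zero_enat_def)
      then show False using assms(3) pd_eq_0_iff by simp
    qed
    then show False
      using pd_even_not_proj_inj[of t x j] proj_inj_funpow_F[OF t] assms q j by simp
  qed
  with q that show ?thesis by blast
qed

lemma odd_pd_split:
  assumes "pd x z = enat k" "odd k" "x < y" "y < z" "z \<le> F x"
  shows "\<exists>q r. pd x y = enat q \<and> pd y z = enat r \<and> odd q \<and> odd r \<and> q \<le> r"
  using assms
proof (induction k arbitrary: x y z rule: less_induct)
  case (less k)
  obtain k' where k: "k = Suc k'" using \<open>odd k\<close> by (cases k) auto
  have z: "z \<noteq> F x" and pd_z: "pd z (F x) = enat k'"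
    using less.prems(1) by (simp_all add: k pd_eq_Suc_iff)
  have "z < F x" using z less.prems(5) by simp
  have F_xy: "F x \<le> F y" and F_yz: "F y \<le> F z" using F_mono less.prems(3,4) by auto
  consider "F x = F y" | "F x < F y" "F y = F z" | "F x < F y" "F y < F z"
    using F_xy F_yz by fastforce
  then show ?case
  proof cases
    case 1
    then have "pd x y = enat 1" "pd y z = enat k"
      using less.prems(3,4) \<open>z < F x\<close> pd_z pd_eq_0_iff[of y "F y"]
      by (simp_all add: k pd_eq_Suc_iff zero_enat_def)
    then show ?thesis using \<open>odd k\<close> k by auto
  next
    case 2
    have z_not_inj: "\<not> proj_inj z"
      unfolding proj_inj_def using F_mono[of y "z - 1"] F_mono[of "z - 1" z] less.prems(4) 2 by simp
    have "F x < F z" using 2 by simp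
    then obtain q where "pd z (F x) = enat q" "odd q"
      by (rule pd_odd_inside_not_proj_inj[OF z_not_inj \<open>z < F x\<close>])
    then show ?thesis using pd_z k \<open>odd k\<close> by simp
  next
    case 3
    obtain k'' where k': "k' = Suc k''" using pd_z 3 pd_eq_0_iff by (cases k') (auto simp: zero_enat_def)
    have pd_F: "pd (F x) (F z) = enat k''"
      using pd_z by (simp add: k' pd_eq_Suc_iff)
    have "F z \<le> F (F x)" using F_mono less.prems(5) by simp
    then obtain q r where qr: "pd (F x) (F y) = enat q" "pd (F y) (F z) = enat r" "odd q" "odd r" "q \<le> r"
      using less.IH[OF _ pd_F _ 3] k k' \<open>odd k\<close> by auto
    have "pd x y = enat (q + 2)" "pd y z = enat (r + 2)"
      using qr 3 less.prems(3,4) \<open>z < F x\<close> by (simp_all add: pd_eq_Suc_iff)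
    then show ?thesis using qr by auto
  qed
qed

lemma odd_pd_subinterval:
  assumes ab: "pd a b = enat k" "odd k" "a < b" "b \<le> F a" and xy: "a \<le> x" "x < y" "y \<le> b"
  shows "\<exists>q. pd x y = enat q \<and> odd q"
proof -
  have odd_xb: "\<exists>q. pd x b = enat q \<and> odd q"
    using odd_pd_split[OF ab(1,2) _ _ ab(4), of x] ab xy by (cases "a = x") auto
  then obtain q where q: "pd x b = enat q" "odd q" by blast
  have "b \<le> F x" using F_mono[of a x] xy ab by simp
  then show ?thesis
    using odd_pd_split[OF q, of y] q xy by (cases "y = b") auto
qed

lemma pd_unit_interval_mono:
  assumes ab: "pd a b = enat k" "odd k" "a < b" "b \<le> F a" and uv: "a \<le> u" "u \<le> v" "v < b"
  shows "pd u (u + 1) \<le> pd v (v + 1)"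
proof -
  have step: "pd w (w + 1) \<le> pd (w + 1) (w + 2)" if w: "a \<le> w" "w + 2 \<le> b" for w
  proof -
    obtain q where "pd w (w + 2) = enat q" "odd q"
      using odd_pd_subinterval[OF ab, of w "w + 2"] w by auto
    moreover have "w + 2 \<le> F w" using F_mono[of a w] w ab by simp
    ultimately show ?thesis using odd_pd_split[of w "w + 2" q "w + 1"] by fastforce
  qed
  have "pd u (u + 1) \<le> pd (u + int m) (u + int m + 1)" if "u + int m < b" for m
    using that
  proof (induction m)
    case (Suc m)
    then have "pd u (u + 1) \<le> pd (u + int m) (u + int m + 1)" by simp
    also have "\<dots> \<le> pd (u + int (Suc m)) (u + int (Suc m) + 1)"
      using step[of "u + int m"] Suc.prems uv by (simp add: algebra_simps)
    finally show ?case .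
  qed simp
  from this[of "nat (v - u)"] show ?thesis using uv by simp
qed

end

locale nakayama =
  fixes cyc :: bool and n :: nat and c :: "nat \<Rightarrow> nat"
  assumes is_nakayama: "is_nakayama cyc n c"
begin

lemma n_pos: "0 < n"
  using is_nakayama unfolding is_nakayama_def by simp

lemma kupisch_cyclic: "cyc \<Longrightarrow> i < n \<Longrightarrow> 2 \<le> c i \<and> c i \<le> c ((i + 1) mod n) + 1"
  using is_nakayama unfolding is_nakayama_def by auto

lemma kupisch_linear_last: "\<not> cyc \<Longrightarrow> c (n - 1) = 1"
  using is_nakayama unfolding is_nakayama_def by auto

lemma kupisch_linear: "\<not> cyc \<Longrightarrow> i + 1 < n \<Longrightarrow> 2 \<le> c i \<and> c i \<le> c (i + 1) + 1"
  using is_nakayama unfolding is_nakayama_def by auto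

lemma kupisch_pos:
  assumes "i < n"
  shows "1 \<le> c i"
proof -
  consider "cyc" | "\<not> cyc" "i + 1 < n" | "\<not> cyc" "i = n - 1" using assms by linarith
  then show ?thesis
    using assms kupisch_cyclic[of i] kupisch_linear[of i] kupisch_linear_last by cases auto
qed

lemma add_kupisch_le_linear:
  assumes "\<not> cyc" "i < n"
  shows "i + c i \<le> n"
proof -
  have "i \<le> n - 1" using assms(2) by simp
  then show ?thesis
  proof (induction i rule: inc_induct)
    case base
    then show ?case using kupisch_linear_last[OF assms(1)] n_pos by simp
  next
    case (step i)
    then show ?case using kupisch_linear[OF assms(1), of i] by fastforce
  qed
qed

text \<open>In the linear case the positions outside \<open>[0, n)\<close> get the dummy value \<open>x + 1\<close> (simple
  projective-injectives), which keeps \<open>proj_end\<close> monotone and inflationary on all of \<open>\<int>\<close>.\<close>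
definition proj_end :: "int \<Rightarrow> int" where
  "proj_end x = (if cyc then x + int (c (nat (x mod int n)))
     else if 0 \<le> x \<and> x < int n then x + int (c (nat x)) else x + 1)"

definition in_range :: "int \<Rightarrow> bool" where
  "in_range a \<longleftrightarrow> cyc \<or> (0 \<le> a \<and> a < int n)"

definition interval_module :: "int \<Rightarrow> int \<Rightarrow> nat \<times> nat" where
  "interval_module a b = (nat (a mod int n), nat (b - a))"

lemma nat_mod_n_less: "nat (a mod int n) < n"
  using n_pos by (simp add: nat_less_iff)

lemma nat_mod_n_add_1: "nat ((x + 1) mod int n) = (nat (x mod int n) + 1) mod n"
proof -
  have "(x + 1) mod int n = (x mod int n + 1) mod int n" by (simp add: mod_add_left_eq)
  also have "\<dots> = int ((nat (x mod int n) + 1) mod n)" using n_pos by (simp add: zmod_int add.commute)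
  finally show ?thesis by simp
qed

lemma proj_end_in_range: "in_range a \<Longrightarrow> proj_end a = a + int (c (nat (a mod int n)))"
  unfolding proj_end_def in_range_def by auto

lemma less_proj_end: "x < proj_end x"
  using kupisch_pos[OF nat_mod_n_less[of x]] kupisch_pos[of "nat x"]
  unfolding proj_end_def by (auto simp: nat_less_iff)

lemma proj_end_le_proj_end_add_1: "proj_end x \<le> proj_end (x + 1)"
proof (cases cyc)
  case True
  show ?thesis
    unfolding proj_end_def using True kupisch_cyclic[OF True nat_mod_n_less[of x]]
    by (simp add: nat_mod_n_add_1)
next
  case False
  consider "x < -1" | "x = -1" | "0 \<le> x" "x + 1 < int n" | "x = int n - 1" | "int n \<le> x"
    by linarith
  then show ?thesis
  proof cases
    case 2
    then show ?thesis unfolding proj_end_def using False kupisch_pos[of 0] n_pos by simp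
  next
    case 3
    then have "nat x + 1 < n" by linarith
    then show ?thesis
      unfolding proj_end_def using 3 False kupisch_linear[OF False, of "nat x"]
      by (simp add: nat_add_distrib)
  next
    case 4
    then show ?thesis
      unfolding proj_end_def using False kupisch_linear_last[OF False] n_pos
      by (simp add: nat_diff_distrib)
  qed (unfold proj_end_def; simp add: False)+
qed

lemma proj_end_mono: "x \<le> y \<Longrightarrow> proj_end x \<le> proj_end y"
proof (induction y rule: int_ge_induct)
  case (step y)
  then show ?case using proj_end_le_proj_end_add_1[of y] by simp
qed simp

lemma proj_end_unbounded_below: "\<exists>x. proj_end x < y"
proof (cases cyc)
  case True
  have "c (nat (x mod int n)) \<le> (\<Sum>i<n. c i)" for x
    by (rule member_le_sum) (use nat_mod_n_less in auto)
  then have "proj_end (y - int (\<Sum>i<n. c i) - 1) < y"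
    using True unfolding proj_end_def by (smt (verit) of_nat_mono)
  then show ?thesis by blast
next
  case False
  then have "proj_end (min y 0 - 2) < y" unfolding proj_end_def by simp
  then show ?thesis by blast
qed

sublocale kupisch_map proj_end
  using proj_end_mono less_proj_end proj_end_unbounded_below by unfold_locales

lemma proj_end_le_n: "\<not> cyc \<Longrightarrow> in_range a \<Longrightarrow> proj_end a \<le> int n"
  using add_kupisch_le_linear[of "nat a"] unfolding in_range_def proj_end_def by (auto simp: nat_less_iff)

lemma in_range_if_le_proj_end: "in_range a \<Longrightarrow> a \<le> b \<Longrightarrow> b < proj_end a \<Longrightarrow> in_range b"
  using proj_end_le_n unfolding in_range_def by fastforce

lemma index_below_end_interval:
  assumes "int j \<le> b - a"
  shows "(fst (interval_module a b) + snd (interval_module a b) - j) mod n = nat ((b - int j) mod int n)"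
proof -
  have "nat (a mod int n) + nat (b - a) - j = nat (a mod int n + (b - a - int j))"
    using assms n_pos by (simp add: nat_add_distrib nat_diff_distrib)
  moreover have "nat (a mod int n + (b - a - int j)) mod n
      = nat ((a mod int n + (b - a - int j)) mod int n)"
    using n_pos assms by (simp add: nat_mod_distrib)
  moreover have "(a mod int n + (b - a - int j)) mod int n = (b - int j) mod int n"
    by (simp add: mod_add_left_eq)
  ultimately show ?thesis unfolding interval_module_def by simp
qed

lemma is_module_interval:
  "in_range a \<Longrightarrow> a < b \<Longrightarrow> b \<le> proj_end a \<Longrightarrow> is_module n c (interval_module a b)"
  unfolding is_module_def interval_module_def using proj_end_in_range[of a] nat_mod_n_less[of a] by auto

lemma is_proj_interval_iff:
  "in_range a \<Longrightarrow> a < b \<Longrightarrow> is_proj c (interval_module a b) \<longleftrightarrow> b = proj_end a"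
  unfolding is_proj_def interval_module_def using proj_end_in_range[of a] by auto

lemma syz_interval:
  assumes "in_range a" "a < b" "b < proj_end a"
  shows "syz n c (interval_module a b) = interval_module b (proj_end a)"
proof -
  have "c (nat (a mod int n)) - nat (b - a) = nat (proj_end a - b)"
    using proj_end_in_range[OF assms(1)] assms(2,3) by simp
  then show ?thesis
    using index_below_end_interval[of 0 b a] assms(2) unfolding syz_def by (simp add: interval_module_def)
qed

lemma pdim_interval:
  assumes "in_range a" "a < b" "b \<le> proj_end a"
  shows "pdim n c (interval_module a b) = pd a b"
proof -
  let ?R = "\<lambda>M ab. M = interval_module (fst ab) (snd ab) \<and> in_range (fst ab) \<and>
    fst ab < snd ab \<and> snd ab \<le> proj_end (fst ab)"
  have "steps_until (syz n c) (is_proj c) (interval_module a b)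
      = steps_until (\<lambda>(a, b). (b, proj_end a)) (\<lambda>(a, b). b = proj_end a) (a, b)"
  proof (rule steps_until_bisim[where R = ?R])
    fix M ab
    assume R: "?R M ab"
    then show "is_proj c M \<longleftrightarrow> (\<lambda>(a, b). b = proj_end a) ab"
      using is_proj_interval_iff by (auto split: prod.splits)
    assume "\<not> is_proj c M"
    with R show "?R (syz n c M) ((\<lambda>(a, b). (b, proj_end a)) ab)"
      using is_proj_interval_iff syz_interval in_range_if_le_proj_end proj_end_mono
      by (auto split: prod.splits)
  qed (use assms in simp)
  then show ?thesis unfolding pdim_def pd_def steps_until_def .
qed

lemma top_index_cyclic:
  "(nat ((y - 1) mod int n) + n * l + 1 - l) mod n = nat ((y - int l) mod int n)"
proof -
  let ?s = "nat ((y - 1) mod int n)"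
  have "1 * l \<le> n * l" using n_pos by (intro mult_le_mono1) simp
  then have "l \<le> ?s + n * l + 1" by linarith
  then have "int (?s + n * l + 1 - l) = (y - 1) mod int n + (1 - int l) + int n * int l"
    using n_pos by (simp add: of_nat_diff)
  then have "int ((?s + n * l + 1 - l) mod n) = ((y - 1) mod int n + (1 - int l)) mod int n"
    by (simp add: zmod_int)
  also have "\<dots> = (y - int l) mod int n"
    by (simp add: mod_add_left_eq)
  finally show ?thesis by (metis nat_int)
qed

text \<open>The bound \<open>l \<le> s + 1\<close> of the linear case of \<^const>\<open>ext_ok\<close> is absorbed by the dummy values
  of \<open>proj_end\<close> below \<open>0\<close>.\<close>
lemma ext_ok_iff:
  assumes "\<not> cyc \<Longrightarrow> 0 < y \<and> y \<le> int n"
  shows "ext_ok cyc n c (nat ((y - 1) mod int n)) l \<longleftrightarrow> 1 \<le> l \<and> y \<le> proj_end (y - int l)"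
proof (cases cyc)
  case True
  then show ?thesis
    unfolding ext_ok_def proj_end_def top_index_cyclic by auto
next
  case False
  then have s: "nat ((y - 1) mod int n) = nat (y - 1)" using assms by simp
  show ?thesis
  proof (cases "1 \<le> l \<and> int l \<le> y")
    case True
    then have "nat (y - int l) = nat (y - 1) + 1 - l" "0 \<le> y - int l" "y - int l < int n"
      using assms False by auto
    then show ?thesis unfolding ext_ok_def proj_end_def s using False True by auto
  next
    case l_large: False
    then show ?thesis unfolding ext_ok_def proj_end_def s using False assms by auto
  qed
qed

lemma top_of_eq:
  assumes "\<not> cyc \<Longrightarrow> 0 < y \<and> y \<le> int n" "0 < l" "\<not> cyc \<Longrightarrow> int l \<le> y"
  shows "top_of cyc n (nat ((y - 1) mod int n)) l = nat ((y - int l) mod int n)"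
proof (cases cyc)
  case True
  then show ?thesis unfolding top_of_def top_index_cyclic by simp
next
  case False
  then show ?thesis unfolding top_of_def using assms by (simp add: nat_diff_distrib)
qed

lemma interval_end_bounds_linear:
  "in_range x \<Longrightarrow> x < y \<Longrightarrow> y \<le> proj_end x \<Longrightarrow> \<not> cyc \<Longrightarrow> 0 < y \<and> y \<le> int n"
  using proj_end_le_n[of x] unfolding in_range_def by auto

lemma h_nonneg_linear:
  assumes "in_range x" "x < y" "y \<le> proj_end x" "\<not> cyc"
  shows "0 \<le> h y"
proof -
  have "proj_end (-1) < y"
    using interval_end_bounds_linear[OF assms] assms(4) unfolding proj_end_def by simp
  then show ?thesis using le_F_iff_h_le[of y "-1"] by simp
qed

lemma in_range_h:
  assumes "in_range x" "x < y" "y \<le> proj_end x"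
  shows "in_range (h y)"
  using interval_end_bounds_linear[OF assms] h_nonneg_linear[OF assms] h_less[of y]
  unfolding in_range_def by fastforce

lemma inj_env_interval:
  assumes "in_range x" "x < y" "y \<le> proj_end x"
  shows "inj_env cyc n c (interval_module x y) = interval_module (h y) y"
proof -
  note y_bounds = interval_end_bounds_linear[OF assms]
  have socle: "(fst (interval_module x y) + snd (interval_module x y) - 1) mod n = nat ((y - 1) mod int n)"
    using index_below_end_interval[of 1 y x] assms(2) by simp
  have "{l. ext_ok cyc n c (nat ((y - 1) mod int n)) l} = {l. 1 \<le> l \<and> int l \<le> y - h y}"
    using ext_ok_iff[OF y_bounds] le_F_iff_h_le by auto
  also have "Max \<dots> = nat (y - h y)"
    using h_less[of y] by (intro Max_eqI) (auto intro: finite_subset[of _ "{..nat (y - h y)}"])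
  finally have "Max {l. ext_ok cyc n c (nat ((y - 1) mod int n)) l} = nat (y - h y)" .
  moreover have "top_of cyc n (nat ((y - 1) mod int n)) (nat (y - h y)) = nat (h y mod int n)"
  proof -
    have "\<not> cyc \<Longrightarrow> int (nat (y - h y)) \<le> y"
      using h_nonneg_linear[OF assms] h_less[of y] by linarith
    then show ?thesis using top_of_eq[OF y_bounds, of "nat (y - h y)"] h_less[of y] by simp
  qed
  ultimately show ?thesis
    unfolding inj_env_def Let_def socle
    by (simp add: interval_module_def)
qed

lemma cosyz_interval:
  assumes "in_range x" "x < y" "y \<le> proj_end x"
  shows "cosyz cyc n c (interval_module x y) = interval_module (h y) x"
proof -
  have "h y \<le> x" using assms(3) le_F_iff_h_le by simp
  then have "nat (y - h y) - nat (y - x) = nat (x - h y)" using assms(2) by simp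
  then show ?thesis
    unfolding cosyz_def inj_env_interval[OF assms] using assms(2) by (simp add: interval_module_def)
qed

lemma env_not_proj_interval_iff:
  assumes "in_range x" "x < y" "y \<le> proj_end x"
  shows "0 < snd (interval_module x y) \<and> \<not> is_proj c (inj_env cyc n c (interval_module x y))
    \<longleftrightarrow> \<not> env_proj y"
  using is_proj_interval_iff[OF in_range_h[OF assms] h_less[of y]] assms(2)
  unfolding inj_env_interval[OF assms] env_proj_def by (auto simp: interval_module_def)

lemma in_range_if_not_proj_inj:
  assumes "\<not> proj_inj t"
  shows "in_range t"
proof (rule ccontr)
  assume "\<not> in_range t"
  then have linear: "\<not> cyc" and "t < 0 \<or> int n \<le> t" unfolding in_range_def by auto
  then consider "t < 0" | "t = int n" | "int n < t" by linarith
  then have "proj_end (t - 1) < proj_end t"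
  proof cases
    case 2
    then have "nat (t - 1) = n - 1" by simp
    then show ?thesis
      unfolding proj_end_def using 2 linear kupisch_linear_last[OF linear] n_pos by simp
  qed (unfold proj_end_def; simp add: linear)+
  with assms show False unfolding proj_inj_def by simp
qed

lemma cosyz_funpow_proj:
  assumes "\<not> proj_inj t" "\<forall>i<j. coresol t (Suc i) < coresol t i"
  shows "(cosyz cyc n c ^^ j) (interval_module t (proj_end t))
      = interval_module (coresol t (Suc j)) (coresol t j) \<and> in_range (coresol t (Suc j))"
  using assms(2)
proof (induction j)
  case 0
  then show ?case using in_range_if_not_proj_inj[OF assms(1)] by simp
next
  case (Suc j)
  then have IH: "(cosyz cyc n c ^^ j) (interval_module t (proj_end t))
      = interval_module (coresol t (Suc j)) (coresol t j)" "in_range (coresol t (Suc j))"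
    by auto
  have "coresol t (Suc j) < coresol t j" using Suc.prems by simp
  note interval = IH(2) this coresol_le_F_Suc[of t j]
  show ?case using IH(1) cosyz_interval[OF interval] in_range_h[OF interval] by simp
qed

lemma module_as_interval:
  assumes "is_module n c M"
  obtains a b where "in_range a" "a < b" "b \<le> proj_end a" "interval_module a b = M"
proof
  show "in_range (int (fst M))" "int (fst M) < int (fst M + snd M)"
    "int (fst M + snd M) \<le> proj_end (int (fst M))"
    "interval_module (int (fst M)) (int (fst M + snd M)) = M"
    using assms proj_end_in_range[of "int (fst M)"]
    unfolding is_module_def in_range_def interval_module_def by auto
qed

lemma comp_factors_interval:
  assumes "a < b"
  shows "comp_factors n (interval_module a b)
    = map (\<lambda>j. interval_module (b - int j) (b - int j + 1)) [1..<nat (b - a) + 1]"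
  unfolding comp_factors_def
proof (rule map_cong)
  fix j assume "j \<in> set [1..<nat (b - a) + 1]"
  then have "int j \<le> b - a" using assms by (auto simp: le_nat_iff)
  then show "simple n (fst (interval_module a b) + snd (interval_module a b) - j)
      = interval_module (b - int j) (b - int j + 1)"
    using index_below_end_interval[of j b a] unfolding simple_def
    by (simp add: interval_module_def)
qed (simp add: interval_module_def)

end

locale odd_auslander_nakayama = nakayama +
  fixes d :: nat
  assumes higher_auslander: "higher_auslander cyc n c"
    and gldim_eq: "gldim n c = enat d"
    and odd_d: "odd d"
begin

lemma pd_le_gldim:
  assumes "a < b" "b \<le> proj_end a"
  shows "pd a b \<le> enat d"
proof (cases "in_range a")
  case True
  have "pdim n c (interval_module a b) \<le> gldim n c"
    unfolding gldim_def by (rule SUP_upper) (use is_module_interval[OF True assms] in simp)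
  then show ?thesis using pdim_interval[OF True assms] gldim_eq by simp
next
  case False
  then have "b = proj_end a" using assms unfolding proj_end_def in_range_def by auto
  then have "pd a b = 0" using pd_eq_0_iff by simp
  then show ?thesis by simp
qed

lemma env_proj_coresol_of_domdim:
  assumes t: "\<not> proj_inj t" and "j < d" and nonzero: "\<forall>i\<le>j. coresol t (Suc i) < coresol t i"
  shows "env_proj (coresol t j)"
proof -
  define i where "i = nat (t mod int n)"
  have "interval_module t (proj_end t) = (i, c i)"
    unfolding interval_module_def i_def using proj_end_in_range[OF in_range_if_not_proj_inj[OF t]] by simp
  moreover have "i < n" unfolding i_def by (rule nat_mod_n_less)
  then have "enat d \<le> domdim_mod cyc n c (i, c i)"
    using higher_auslander gldim_eq unfolding higher_auslander_def domdim_def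
    by (metis INF_lower lessThan_iff)
  moreover have "domdim_mod cyc n c M = steps_until (cosyz cyc n c)
      (\<lambda>M. 0 < snd M \<and> \<not> is_proj c (inj_env cyc n c M)) M" for M
    unfolding domdim_mod_def steps_until_def ..
  ultimately have "enat d \<le> steps_until (cosyz cyc n c)
      (\<lambda>M. 0 < snd M \<and> \<not> is_proj c (inj_env cyc n c M)) (interval_module t (proj_end t))"
    by simp
  from not_before_steps_until[OF this \<open>j < d\<close>] show ?thesis
    using cosyz_funpow_proj[OF t] env_not_proj_interval_iff[OF _ _ coresol_le_F_Suc] nonzero by simp
qed

sublocale odd_auslander_map proj_end d
  using pd_le_gldim odd_d env_proj_coresol_of_domdim by unfold_locales

lemma char_seq_interval:
  assumes "in_range a" "a < b" "b \<le> proj_end a"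
    and odd_simples: "\<And>u. a \<le> u \<Longrightarrow> u < b \<Longrightarrow> \<exists>q. pd u (u + 1) = enat q \<and> odd q"
  shows "char_seq n c (interval_module a b) = map (\<lambda>j. pd (b - int j) (b - int j + 1)) [1..<nat (b - a) + 1]"
  unfolding char_seq_def comp_factors_interval[OF assms(2)] map_map
proof (rule map_cong)
  fix j assume "j \<in> set [1..<nat (b - a) + 1]"
  then have u: "a \<le> b - int j" "b - int j < b" by auto
  then have "in_range (b - int j)"
    using in_range_if_le_proj_end[OF assms(1)] assms(3) by simp
  then have "pdim n c (interval_module (b - int j) (b - int j + 1)) = pd (b - int j) (b - int j + 1)"
    using pdim_interval less_proj_end[of "b - int j"] by simp
  then show "((\<lambda>F. if odd_module n c F then pdim n c F else pdim n c (interval_module a b)) \<circ>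
      (\<lambda>j. interval_module (b - int j) (b - int j + 1))) j = pd (b - int j) (b - int j + 1)"
    using odd_simples[OF u] unfolding odd_module_def by auto
qed simp

end

theorem proposition7p1:
  fixes cyc :: bool and n :: nat and c :: "nat \<Rightarrow> nat" and d :: nat and M :: "nat \<times> nat"
  assumes "is_nakayama cyc n c"
    and "higher_auslander cyc n c"
    and "gldim n c = enat d" and "odd d"
    and "is_module n c M" and "odd_module n c M"
  shows "(\<forall>z\<in>set (char_seq n c M). \<exists>k. z = enat k \<and> odd k)
         \<and> sorted_wrt (\<ge>) (char_seq n c M)"
proof -
  interpret odd_auslander_nakayama cyc n c d
    using assms(1-4)
    by (intro odd_auslander_nakayama.intro nakayama.intro odd_auslander_nakayama_axioms.intro)
  obtain a b where interval: "in_range a" "a < b" "b \<le> proj_end a"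
    and M_eq: "interval_module a b = M"
    using module_as_interval[OF assms(5)] by blast
  obtain k where k: "pd a b = enat k" "odd k"
    using assms(6) pdim_interval[OF interval] M_eq unfolding odd_module_def by auto
  have odd_simples: "\<exists>q. pd u (u + 1) = enat q \<and> odd q" if "a \<le> u" "u < b" for u
    using odd_pd_subinterval[OF k interval(2,3) that(1), of "u + 1"] that(2) by simp
  have char_seq: "char_seq n c M = map (\<lambda>j. pd (b - int j) (b - int j + 1)) [1..<nat (b - a) + 1]"
    using char_seq_interval[OF interval odd_simples] M_eq by simp
  have "sorted_wrt (\<lambda>j j'. pd (b - int j') (b - int j' + 1) \<le> pd (b - int j) (b - int j + 1))
      [1..<nat (b - a) + 1]"
    using pd_unit_interval_mono[OF k interval(2,3)] by (intro sorted_wrt_mono_rel[OF _ sorted_wrt_upt]) auto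
  then show ?thesis
    using odd_simples unfolding char_seq by (auto simp: sorted_wrt_map)
qed

end
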